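(* Let $P=\operatorname{conv}(W(\Lambda))$ be a full-dimensional $W$-symmetric polytope and $K\subseteq S$. Let $\mathcal{F}_K$ be the set of facets of $P$ whose barycenters lie in $C_K$, and for a facet $F$ let $W_F$ be its stabilizer in $W_K$. Let $\mathcal{F}=\{(F,s): F\in\mathcal{F}_K,\ s\in W_K/W_F\}$. (1) The map $F\mapsto F\cap C_K$ for $F\in\mathcal{F}_K$, and $k\mapsto H_k\cap P$ for $k\in K$, is a bijection from $\mathcal{F}_K\sqcup K$ onto the set of facets of the polytope $P/W_K=P\cap C_K$. (2) The map $(F,s)\mapsto s(F)$ is a bijection from $\mathcal{F}$ onto the set of facets of $P$.
   Context: $V$ is a real Euclidean space of dimension $n$, $R$ a reduced root system spanning $V$ with simple system $S=\{\alpha_1,\dots,\alpha_n\}$, identified with $\{1,\dots,n\}$; $r_i$ is the reflection $x\mapsto x-\frac{2\langle x,\alpha_i\rangle}{\langle\alpha_i,\alpha_i\rangle}\alpha_i$ and $H_i$ its fixed hyperplane. $W$ is generated by all $r_i$, $W_K$ by $r_k$, $k\in K$. $C_K=\{x:\langle x,\alpha_k\rangle\ge0\ \forall k\in K\}$; $\Lambda\subset C_S$ finite. $P/W_K$ is identified with $P\cap C_K$ via the fundamental domain $C_K$. *)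

theory Defs
  imports "HOL-Analysis.Analysis"
begin

definition refl :: "'a::euclidean_space \<Rightarrow> 'a \<Rightarrow> 'a" where
  "refl a x = x - ((2 * (x \<bullet> a)) / (a \<bullet> a)) *\<^sub>R a"

definition root_system :: "'a::euclidean_space set \<Rightarrow> bool" where
  "root_system R \<longleftrightarrow> finite R \<and> 0 \<notin> R \<and> span R = UNIV \<and>
     (\<forall>a\<in>R. refl a ` R = R) \<and>
     (\<forall>a\<in>R. \<forall>b\<in>R. (2 * (b \<bullet> a)) / (a \<bullet> a) \<in> \<int>)"

definition reduced :: "'a::euclidean_space set \<Rightarrow> bool" where
  "reduced R \<longleftrightarrow> (\<forall>a\<in>R. \<forall>c::real. c *\<^sub>R a \<in> R \<longrightarrow> c = 1 \<or> c = -1)"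

definition simple_system :: "'a::euclidean_space set \<Rightarrow> 'a set \<Rightarrow> bool" where
  "simple_system R S \<longleftrightarrow> S \<subseteq> R \<and> independent S \<and>
     (\<forall>b\<in>R. \<exists>c. b = (\<Sum>a\<in>S. c a *\<^sub>R a) \<and> (\<forall>a\<in>S. c a \<in> \<int>) \<and>
        ((\<forall>a\<in>S. c a \<ge> 0) \<or> (\<forall>a\<in>S. c a \<le> 0)))"

inductive_set weyl_group :: "'a::euclidean_space set \<Rightarrow> ('a \<Rightarrow> 'a) set"
  for K :: "'a set" where
  id: "id \<in> weyl_group K"
| step: "w \<in> weyl_group K \<Longrightarrow> a \<in> K \<Longrightarrow> refl a \<circ> w \<in> weyl_group K"

definition cone :: "'a::euclidean_space set \<Rightarrow> 'a set" where
  "cone K = {x. \<forall>k\<in>K. x \<bullet> k \<ge> 0}"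

definition wall :: "'a::euclidean_space \<Rightarrow> 'a set" where
  "wall k = {x. x \<bullet> k = 0}"

definition barycenter :: "'a::euclidean_space set \<Rightarrow> 'a" where
  "barycenter F = (1 / real (card {v. v extreme_point_of F})) *\<^sub>R
                   (\<Sum>v\<in>{v. v extreme_point_of F}. v)"

definition stabilizer :: "'a::euclidean_space set \<Rightarrow> 'a set \<Rightarrow> ('a \<Rightarrow> 'a) set" where
  "stabilizer K F = {w \<in> weyl_group K. w ` F = F}"

definition left_cosets :: "'a::euclidean_space set \<Rightarrow> 'a set \<Rightarrow> ('a \<Rightarrow> 'a) set set" where
  "left_cosets K F = {(\<lambda>u. w \<circ> u) ` stabilizer K F | w. w \<in> weyl_group K}"

end

theory Submission
  imports Defs
begin

text \<open>
  The closed chamber \<open>cone K\<close> is a strict fundamental domain for \<open>W\<^sub>K\<close>: every orbit meets it,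
  at a maximiser of the inner product with a vector that is positive on \<open>K\<close>, and meets it only
  once, by induction on the length of words in the simple reflections using the deletion
  condition.

  A facet \<open>F\<close> of \<open>P\<close> is determined by its barycenter, a point of its relative interior.
  Part (2) follows: \<open>W\<^sub>K\<close> moves every facet to one whose barycenter is in the chamber, and two
  such facets in one orbit have equal barycenters, hence are equal; the facets in the orbit of \<open>F\<close>
  then correspond to the cosets of its stabiliser.

  For part (1), a facet \<open>G\<close> of \<open>P \<inter> cone K\<close> either lies in a wall \<open>H\<^sub>k\<close> or has a relative
  interior point \<open>x\<close> in the open chamber; then \<open>x\<close> lies on a facet \<open>F\<close> of \<open>P\<close>, and comparing
  the facet inequality of \<open>F\<close> at \<open>x\<close> and at its reflections \<open>refl k x\<close> shows that the
  barycenter of \<open>F\<close> lies in \<open>cone K\<close>. Conversely \<open>F \<inter> cone K\<close> is a facet, because moving the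
  barycenter of \<open>F\<close> slightly inside \<open>F\<close> reaches the open chamber; distinct walls and facets are
  told apart by the witness points constructed along the way and by \<open>0 \<in> interior P\<close>.
\<close>

section \<open>Reflections and Weyl groups\<close>

text \<open>Since \<open>x / 0 = 0\<close>, \<open>refl 0\<close> is the identity, so no lemma about reflections needs \<open>a \<noteq> 0\<close>.\<close>
lemma refl_0 [simp]: "refl a 0 = 0"
  by (simp add: refl_def)

lemma orthogonal_transformation_refl: "orthogonal_transformation (refl a)"
  unfolding orthogonal_transformation_def linear_iff refl_def
  by (auto simp: inner_add_left inner_diff_left inner_diff_right algebra_simps
      add_divide_distrib inner_commute power2_eq_square)

lemma refl_refl [simp]: "refl a (refl a x) = x"
  by (cases "a = 0") (auto simp: refl_def inner_diff_left algebra_simps)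

lemma refl_self [simp]: "refl a a = - a"
  by (cases "a = 0") (auto simp: refl_def algebra_simps scaleR_2)

lemma refl_eq_self_iff: "refl a x = x \<longleftrightarrow> x \<bullet> a = 0"
  by (cases "a = 0") (auto simp: refl_def)

lemma inner_refl_right: "u \<bullet> refl a x = u \<bullet> x - 2 * (x \<bullet> a) / (a \<bullet> a) * (u \<bullet> a)"
  by (simp add: refl_def inner_diff_right)

lemma refl_comp_refl [simp]: "refl a \<circ> refl a = id"
  by auto

lemma orthogonal_transformation_refl_conj:
  assumes "orthogonal_transformation u"
  shows "u (refl a x) = refl (u a) (u x)"
  using assms unfolding refl_def orthogonal_transformation_def
  by (simp add: linear_diff linear_scale)

lemma refl_image_eq:
  assumes "\<And>x. x \<in> A \<Longrightarrow> refl a x \<in> A"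
  shows "refl a ` A = A"
proof
  show "refl a ` A \<subseteq> A" using assms by blast
  show "A \<subseteq> refl a ` A"
  proof
    fix x assume "x \<in> A"
    then show "x \<in> refl a ` A" by (rule rev_image_eqI[OF assms]) simp
  qed
qed

lemma weyl_group_comp: "w \<in> weyl_group K \<Longrightarrow> v \<in> weyl_group K \<Longrightarrow> w \<circ> v \<in> weyl_group K"
proof (induction rule: weyl_group.induct)
  case (step w a)
  then show ?case by (metis comp_assoc weyl_group.step)
qed simp

lemma refl_in_weyl_group: "a \<in> K \<Longrightarrow> refl a \<in> weyl_group K"
  using weyl_group.step[OF weyl_group.id] by fastforce

lemma weyl_group_mono: "w \<in> weyl_group K \<Longrightarrow> K \<subseteq> K' \<Longrightarrow> w \<in> weyl_group K'"
  by (induction rule: weyl_group.induct) (auto intro: weyl_group.intros)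

lemma orthogonal_transformation_weyl_group:
  "w \<in> weyl_group K \<Longrightarrow> orthogonal_transformation w"
proof (induction rule: weyl_group.induct)
  case id
  then show ?case by (simp add: id_def)
next
  case (step w a)
  then show ?case using orthogonal_transformation_compose orthogonal_transformation_refl by blast
qed

lemma inv_in_weyl_group: "w \<in> weyl_group K \<Longrightarrow> inv w \<in> weyl_group K"
proof (induction rule: weyl_group.induct)
  case id
  then show ?case by (metis inv_id weyl_group.id)
next
  case (step w a)
  have "inv (refl a \<circ> w) = inv w \<circ> refl a"
    using o_inv_distrib orthogonal_transformation_bij orthogonal_transformation_refl
      orthogonal_transformation_weyl_group[OF step.hyps(1)] inv_equality[of "refl a" "refl a"]
    by (metis refl_refl)
  then show ?case
    using weyl_group_comp[OF step.IH refl_in_weyl_group[OF step.hyps(2)]] by (simp only:)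
qed

lemma weyl_group_inv_comp [simp]: "w \<in> weyl_group K \<Longrightarrow> inv w \<circ> w = id"
  by (meson inv_o_cancel orthogonal_transformation_inj orthogonal_transformation_weyl_group)

lemma weyl_group_comp_inv [simp]: "w \<in> weyl_group K \<Longrightarrow> w \<circ> inv w = id"
  by (meson bij_is_surj orthogonal_transformation_bij orthogonal_transformation_weyl_group surj_iff)

lemma finite_weyl_group:
  assumes "finite R" "span R = UNIV" "K \<subseteq> R" "\<And>a. a \<in> K \<Longrightarrow> refl a ` R \<subseteq> R"
  shows "finite (weyl_group K)"
proof -
  have maps_R: "w ` R \<subseteq> R" if "w \<in> weyl_group K" for w
    using that by (induction rule: weyl_group.induct) (use assms(4) in \<open>auto simp: image_subset_iff\<close>)
  have "inj_on (\<lambda>w. restrict w R) (weyl_group K)"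
  proof (rule inj_onI)
    fix w v assume "w \<in> weyl_group K" "v \<in> weyl_group K" "restrict w R = restrict v R"
    then show "w = v"
      using linear_eq_on_span[of w v R] assms(2) orthogonal_transformation_weyl_group
        orthogonal_transformation_linear by (metis UNIV_I restrict_apply' ext)
  qed
  moreover have "(\<lambda>w. restrict w R) ` weyl_group K \<subseteq> (\<Pi>\<^sub>E x\<in>R. R)"
    using maps_R by (force simp: PiE_iff)
  ultimately show ?thesis
    using assms(1) finite_PiE finite_imageD finite_subset by (metis (no_types, lifting))
qed

lemma sum_weyl_group_refl_comp:
  "a \<in> K \<Longrightarrow> (\<Sum>w\<in>weyl_group K. g (refl a \<circ> w)) = (\<Sum>w\<in>weyl_group K. g w)"
proof (rule sum.reindex_bij_betw)
  assume a: "a \<in> K"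
  have "refl a \<circ> (refl a \<circ> w) = w" for w by (simp add: fun_eq_iff)
  then show "bij_betw (\<lambda>w. refl a \<circ> w) (weyl_group K) (weyl_group K)"
    by (intro bij_betwI[where g = "\<lambda>w. refl a \<circ> w"]) (auto intro: weyl_group.step[OF _ a])
qed

lemma id_in_stabilizer: "id \<in> stabilizer K F"
  by (simp add: stabilizer_def weyl_group.id)

lemma stabilizer_left_coset_eq:
  assumes g: "g \<in> stabilizer K F"
  shows "(\<lambda>u. g \<circ> u) ` stabilizer K F = stabilizer K F"
proof
  have gW: "g \<in> weyl_group K" and gF: "g ` F = F" using g by (auto simp: stabilizer_def)
  have comp: "h \<circ> u \<in> stabilizer K F"
    if "h \<in> weyl_group K" "h ` F = F" "u \<in> stabilizer K F" for h u
  proof -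
    have u: "u \<in> weyl_group K" "u ` F = F" using that(3) by (auto simp: stabilizer_def)
    have "(h \<circ> u) ` F = h ` (u ` F)" by (simp only: image_comp)
    also have "\<dots> = F" using u(2) that(2) by simp
    finally show ?thesis using weyl_group_comp[OF that(1) u(1)] by (simp add: stabilizer_def)
  qed
  show "(\<lambda>u. g \<circ> u) ` stabilizer K F \<subseteq> stabilizer K F"
    using comp[OF gW gF] by blast
  show "stabilizer K F \<subseteq> (\<lambda>u. g \<circ> u) ` stabilizer K F"
  proof
    fix u assume u: "u \<in> stabilizer K F"
    have "inv g ` F = inv g ` g ` F" using gF by simp
    then have "inv g ` F = F" using weyl_group_inv_comp[OF gW] by (simp add: image_comp)
    then have "inv g \<circ> u \<in> stabilizer K F"
      using comp[OF inv_in_weyl_group[OF gW] _ u] by blast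
    moreover have "u = g \<circ> (inv g \<circ> u)"
      using weyl_group_comp_inv[OF gW] by (metis comp_assoc id_comp)
    ultimately show "u \<in> (\<lambda>u. g \<circ> u) ` stabilizer K F" by (metis image_eqI)
  qed
qed

text \<open>The representative chosen by \<open>SOME\<close> may be any element of the coset, but all of them
  move \<open>F\<close> in the same way.\<close>
lemma some_left_coset_image:
  "(SOME v. v \<in> (\<lambda>u. w \<circ> u) ` stabilizer K F) ` F = w ` F"
proof -
  have "w \<circ> id \<in> (\<lambda>u. w \<circ> u) ` stabilizer K F" using id_in_stabilizer by (rule imageI)
  then have "(SOME v. v \<in> (\<lambda>u. w \<circ> u) ` stabilizer K F) \<in> (\<lambda>u. w \<circ> u) ` stabilizer K F"
    using someI[of "\<lambda>v. v \<in> (\<lambda>u. w \<circ> u) ` stabilizer K F"] by blast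
  then obtain u where u: "u \<in> stabilizer K F"
    and eq: "(SOME v. v \<in> (\<lambda>u. w \<circ> u) ` stabilizer K F) = w \<circ> u"
    by blast
  have "u ` F = F" using u by (simp add: stabilizer_def)
  then show ?thesis unfolding eq by (simp only: image_comp[symmetric])
qed

primrec refl_word :: "'a::euclidean_space list \<Rightarrow> 'a \<Rightarrow> 'a" where
  "refl_word [] = id"
| "refl_word (a # l) = refl a \<circ> refl_word l"

lemma refl_word_append: "refl_word (l1 @ l2) = refl_word l1 \<circ> refl_word l2"
  by (induction l1) (auto simp: comp_assoc)

lemma weyl_group_iff_refl_word: "w \<in> weyl_group K \<longleftrightarrow> (\<exists>l. set l \<subseteq> K \<and> w = refl_word l)"
proof
  show "w \<in> weyl_group K \<Longrightarrow> \<exists>l. set l \<subseteq> K \<and> w = refl_word l"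
  proof (induction rule: weyl_group.induct)
    case id
    then show ?case by (metis empty_subsetI refl_word.simps(1) set_empty)
  next
    case (step w a)
    then show ?case by (metis insert_subset list.simps(15) refl_word.simps(2))
  qed
  show "\<exists>l. set l \<subseteq> K \<and> w = refl_word l \<Longrightarrow> w \<in> weyl_group K"
  proof (elim exE conjE)
    fix l show "set l \<subseteq> K \<Longrightarrow> w = refl_word l \<Longrightarrow> w \<in> weyl_group K"
      by (induction l arbitrary: w) (auto intro: weyl_group.intros)
  qed
qed

lemma refl_word_in_weyl_group: "set l \<subseteq> K \<Longrightarrow> refl_word l \<in> weyl_group K"
  using weyl_group_iff_refl_word by blast

lemma orthogonal_transformation_refl_word: "orthogonal_transformation (refl_word l)"
  using orthogonal_transformation_weyl_group refl_word_in_weyl_group by blast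

lemma independent_inner_values:
  fixes B :: "'a::euclidean_space set"
  assumes "independent B"
  obtains z where "\<And>b. b \<in> B \<Longrightarrow> z \<bullet> b = f b"
proof -
  obtain g :: "'a \<Rightarrow> real" where "linear g" "\<And>b. b \<in> B \<Longrightarrow> g b = f b"
    using linear_independent_extend[OF assms] by metis
  moreover have "g b = adjoint g 1 \<bullet> b" for b
    using adjoint_works[OF \<open>linear g\<close>, of b 1] by (simp add: inner_commute)
  ultimately show ?thesis using that by metis
qed

lemma independent_direction:
  fixes u b :: "'a::euclidean_space"
  assumes "independent J" "\<And>j. j \<in> J \<Longrightarrow> b \<bullet> j = 0" "b \<bullet> u \<noteq> 0"
  obtains d where "d \<bullet> u = 0" "\<And>j. j \<in> J \<Longrightarrow> d \<bullet> j = 1"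
proof -
  have "u \<notin> span J"
  proof
    assume "u \<in> span J"
    then have "orthogonal b u" by (rule orthogonal_to_span) (simp add: assms(2) orthogonal_def)
    then show False using assms(3) by (simp add: orthogonal_def)
  qed
  then have "independent (insert u J)" using assms(1) independent_insertI by blast
  moreover have "u \<notin> J" using \<open>u \<notin> span J\<close> span_base by blast
  ultimately obtain d where d: "\<And>x. x \<in> insert u J \<Longrightarrow> d \<bullet> x = (if x = u then 0 else 1)"
    using independent_inner_values[of "insert u J" "\<lambda>x. if x = u then 0 else 1"] by blast
  show ?thesis
  proof (rule that)
    show "d \<bullet> u = 0" using d by simp
    show "d \<bullet> j = 1" if "j \<in> J" for j using d[of j] that \<open>u \<notin> J\<close> by auto
  qed
qed

section \<open>The closed chamber as a fundamental domain\<close>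

locale parabolic_subgroup =
  fixes R S K :: "'a::euclidean_space set"
  assumes root_system: "root_system R" and reduced: "reduced R"
    and simple_system: "simple_system R S" and K_subset_S: "K \<subseteq> S"
begin

lemma finite_R: "finite R" and zero_notin_R: "0 \<notin> R" and span_R: "span R = UNIV"
  and refl_image_R: "a \<in> R \<Longrightarrow> refl a ` R = R"
  using root_system unfolding root_system_def by auto

lemma S_subset_R: "S \<subseteq> R" and independent_S: "independent S"
  and root_coeffs_sign: "b \<in> R \<Longrightarrow> \<exists>c. b = (\<Sum>a\<in>S. c a *\<^sub>R a) \<and>
        ((\<forall>a\<in>S. c a \<ge> 0) \<or> (\<forall>a\<in>S. c a \<le> 0))"
  using simple_system unfolding simple_system_def by auto

lemma finite_S: "finite S" using S_subset_R finite_R finite_subset by blast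

lemma finite_K: "finite K" using K_subset_S finite_S finite_subset by blast

lemma K_subset_R: "K \<subseteq> R" using K_subset_S S_subset_R by blast

lemma zero_notin_K: "0 \<notin> K" using K_subset_R zero_notin_R by blast

lemma independent_K: "independent K" using independent_S K_subset_S independent_mono by blast

lemma span_S: "span S = UNIV"
proof -
  have "R \<subseteq> span S"
    using root_coeffs_sign by (fastforce intro: span_sum span_scale span_base)
  then have "span R \<subseteq> span S" by (simp add: span_minimal)
  then show ?thesis using span_R by auto
qed

lemma finite_weyl_group_subset_S: "K' \<subseteq> S \<Longrightarrow> finite (weyl_group K')"
  using finite_weyl_group[OF finite_R span_R] S_subset_R refl_image_R by blast

lemma weyl_group_K_subset_S: "w \<in> weyl_group K \<Longrightarrow> w \<in> weyl_group S"
  using weyl_group_mono K_subset_S by blast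

text \<open>\<open>R \<inter> span K\<close> is the root system of \<open>W\<^sub>K\<close> with simple system \<open>K\<close>; its positive and
  negative roots are those with \<open>nonneg_coords\<close> and \<open>nonpos_coords\<close>.\<close>
abbreviation nonneg_coords :: "'a \<Rightarrow> bool" where
  "nonneg_coords v \<equiv> \<forall>a\<in>K. 0 \<le> representation K v a"

abbreviation nonpos_coords :: "'a \<Rightarrow> bool" where
  "nonpos_coords v \<equiv> \<forall>a\<in>K. representation K v a \<le> 0"

lemma sum_representation_K: "v \<in> span K \<Longrightarrow> (\<Sum>a\<in>K. representation K v a *\<^sub>R a) = v"
  by (rule sum_representation_eq[OF independent_K _ finite_K order_refl])

lemma root_coords_sign:
  assumes "b \<in> R" "b \<in> span K"
  shows "nonneg_coords b \<or> nonpos_coords b"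
proof -
  obtain c where c: "b = (\<Sum>a\<in>S. c a *\<^sub>R a)" "(\<forall>a\<in>S. c a \<ge> 0) \<or> (\<forall>a\<in>S. c a \<le> 0)"
    using root_coeffs_sign[OF assms(1)] by blast
  have b_S: "(\<Sum>a\<in>S. representation S b a *\<^sub>R a) = b"
    using sum_representation_eq[OF independent_S _ finite_S order_refl] span_S by simp
  have "(\<Sum>a\<in>S. (c a - representation S b a) *\<^sub>R a) = 0"
    using c(1) b_S by (simp add: scaleR_diff_left sum_subtractf)
  then have "\<forall>a\<in>S. c a = representation S b a"
    using independentD[OF independent_S finite_S order_refl] by (metis eq_iff_diff_eq_0)
  moreover have "representation S b = representation K b"
    by (rule representation_extend[OF independent_S assms(2) K_subset_S])
  ultimately show ?thesis using c(2) K_subset_S by auto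
qed

lemma nonneg_nonpos_coords_imp_zero:
  assumes "v \<in> span K" "nonneg_coords v" "nonpos_coords v"
  shows "v = 0"
proof -
  have "\<forall>a\<in>K. representation K v a = 0" using assms(2,3) by (meson order_antisym)
  then show ?thesis using sum_representation_K[OF assms(1)] by simp
qed

lemma inner_nonpos_coords:
  assumes "y \<in> cone K" "v \<in> span K" "nonpos_coords v"
  shows "y \<bullet> v \<le> 0"
proof -
  have "y \<bullet> v = (\<Sum>a\<in>K. representation K v a * (y \<bullet> a))"
    by (subst sum_representation_K[OF assms(2), symmetric]) (simp add: inner_sum_right)
  also have "\<dots> \<le> 0"
    using assms(1,3) unfolding cone_def by (auto intro!: sum_nonpos mult_nonpos_nonneg)
  finally show ?thesis .
qed

lemma weyl_group_maps_roots:
  "w \<in> weyl_group K \<Longrightarrow> b \<in> R \<inter> span K \<Longrightarrow> w b \<in> R \<inter> span K"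
proof (induction rule: weyl_group.induct)
  case (step w a)
  then have "refl a (w b) \<in> span K"
    unfolding refl_def by (intro span_diff span_scale) (auto intro: span_base)
  then show ?case using step refl_image_R K_subset_R by auto
qed simp

lemma K_subset_roots_span: "K \<subseteq> R \<inter> span K"
  using K_subset_R span_superset by blast

lemma refl_word_maps_roots:
  "set l \<subseteq> K \<Longrightarrow> b \<in> R \<inter> span K \<Longrightarrow> refl_word l b \<in> R \<inter> span K"
  using weyl_group_maps_roots weyl_group_iff_refl_word by blast

lemma refl_nonneg_coords:
  assumes a: "a \<in> K" and b: "b \<in> R \<inter> span K" "nonneg_coords b" "b \<noteq> a"
  shows "nonneg_coords (refl a b)"
proof -
  have "\<exists>c\<in>K - {a}. representation K b c \<noteq> 0"
  proof (rule ccontr)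
    assume "\<not> ?thesis"
    then have "(\<Sum>c\<in>K. representation K b c *\<^sub>R c) = representation K b a *\<^sub>R a"
      using a finite_K by (subst sum.remove[of _ a]) (auto intro: sum.neutral)
    then have b_eq: "b = representation K b a *\<^sub>R a" using sum_representation_K b(1) by simp
    then have "representation K b a = 1 \<or> representation K b a = -1"
      using reduced b(1) a K_subset_R unfolding reduced_def by (metis IntD1 subsetD)
    then show False using b_eq b(2,3) a by force
  qed
  then obtain c where c: "c \<in> K" "c \<noteq> a" "representation K b c > 0"
    using b(2) by force
  define m where "m = 2 * (b \<bullet> a) / (a \<bullet> a)"
  have "representation K (refl a b) c = representation K b c - m * representation K a c"
    unfolding refl_def m_def[symmetric] using b(1) span_base[OF a]
    by (simp add: representation_diff[OF independent_K] representation_scale[OF independent_K] span_scale)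
  also have "\<dots> = representation K b c"
    using representation_basis[OF independent_K a] c(2) by simp
  finally have "representation K (refl a b) c > 0" using c(3) by simp
  moreover have "refl a b \<in> R \<inter> span K"
    using weyl_group_maps_roots[OF refl_in_weyl_group[OF a] b(1)] .
  ultimately show ?thesis using root_coords_sign c(1) by force
qed

lemma nonpos_coords_refl_imp_eq:
  assumes "a \<in> K" "b \<in> R \<inter> span K" "nonneg_coords b" "nonpos_coords (refl a b)"
  shows "b = a"
proof (rule ccontr)
  assume "b \<noteq> a"
  then have "refl a b = 0"
    using refl_nonneg_coords[OF assms(1-3)] assms(4) nonneg_nonpos_coords_imp_zero
      weyl_group_maps_roots[OF refl_in_weyl_group[OF assms(1)] assms(2)] by blast
  then show False using assms(2) zero_notin_R by (metis IntD1 refl_refl refl_0)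
qed

lemma refl_word_comp_refl: "refl_word l \<circ> refl a = refl (refl_word l a) \<circ> refl_word l"
  using orthogonal_transformation_refl_conj[OF orthogonal_transformation_refl_word] by fastforce

lemma refl_word_deletion:
  assumes "set l \<subseteq> K" "a \<in> K" "nonpos_coords (refl_word l a)"
  shows "\<exists>l'. set l' \<subseteq> K \<and> length l' < length l \<and> refl_word l \<circ> refl a = refl_word l'"
  using assms
proof (induction l)
  case Nil
  then show ?case using representation_basis[OF independent_K] by force
next
  case (Cons s l)
  then have s: "s \<in> K" and l: "set l \<subseteq> K" by auto
  have b: "refl_word l a \<in> R \<inter> span K"
    using refl_word_maps_roots[OF l] K_subset_roots_span Cons.prems(2) by blast
  show ?case
  proof (cases "nonpos_coords (refl_word l a)")
    case True
    then obtain l' where l': "set l' \<subseteq> K" "length l' < length l" "refl_word l \<circ> refl a = refl_word l'"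
      using Cons.IH[OF l Cons.prems(2)] by blast
    then have "refl_word (s # l) \<circ> refl a = refl_word (s # l')"
      by (simp only: refl_word.simps comp_assoc)
    moreover have "set (s # l') \<subseteq> K" "length (s # l') < length (s # l)" using s l' by auto
    ultimately show ?thesis by blast
  next
    case False
    then have "refl_word l a = s"
      using nonpos_coords_refl_imp_eq[OF s b] root_coords_sign b Cons.prems(3) by force
    then have "refl_word (s # l) \<circ> refl a = (refl s \<circ> refl s) \<circ> refl_word l"
      by (simp only: refl_word.simps comp_assoc refl_word_comp_refl)
    then have "refl_word (s # l) \<circ> refl a = refl_word l" by simp
    moreover have "length l < length (s # l)" by simp
    ultimately show ?thesis using l by blast
  qed
qed

text \<open>Induction on the length of a word: if its last letter \<open>k\<close> is sent to a negative root,
  then \<open>x \<bullet> k \<le> 0\<close>, so \<open>refl k\<close> fixes \<open>x\<close> and can be dropped; otherwise the word shortens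
  by \<open>refl_word_deletion\<close>.\<close>
lemma refl_word_chamber_fixed:
  assumes "set l \<subseteq> K" "x \<in> cone K" "refl_word l x \<in> cone K"
  shows "refl_word l x = x"
  using assms
proof (induction "length l" arbitrary: l rule: less_induct)
  case less
  show ?case
  proof (cases l rule: rev_exhaust)
    case (snoc l0 k)
    then have k: "k \<in> K" and l0: "set l0 \<subseteq> K" using less.prems(1) by auto
    have l_eq: "refl_word l = refl_word l0 \<circ> refl k" using snoc by (simp add: refl_word_append)
    have lk: "refl_word l k \<in> R \<inter> span K"
      using refl_word_maps_roots[OF less.prems(1)] K_subset_roots_span k by blast
    show ?thesis
    proof (cases "nonpos_coords (refl_word l k)")
      case True
      have "x \<bullet> k = refl_word l x \<bullet> refl_word l k"
        using orthogonal_transformation_refl_word[of l] by (simp add: orthogonal_transformation_def)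
      also have "\<dots> \<le> 0" using inner_nonpos_coords[OF less.prems(3) _ True] lk by simp
      finally have "refl k x = x"
        using less.prems(2) k by (simp add: refl_eq_self_iff cone_def order_antisym)
      then show ?thesis using less.hyps[of l0] l_eq snoc l0 less.prems by simp
    next
      case False
      have "refl_word l k = - refl_word l0 k"
        using l_eq orthogonal_transformation_refl_word[of l0]
        by (simp add: orthogonal_transformation_def linear_neg)
      moreover have "refl_word l0 k \<in> span K"
        using refl_word_maps_roots[OF l0] K_subset_roots_span k by blast
      moreover have "nonneg_coords (refl_word l k)" using False root_coords_sign lk by blast
      ultimately have "nonpos_coords (refl_word l0 k)"
        by (simp add: representation_neg[OF independent_K])
      then obtain l' where "set l' \<subseteq> K" "length l' < length l" "refl_word l = refl_word l'"
        using refl_word_deletion[OF l0 k] l_eq snoc by auto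
      then show ?thesis using less.hyps[of l'] less.prems by simp
    qed
  qed simp
qed

lemma weyl_group_chamber_fixed:
  assumes "w \<in> weyl_group K" "x \<in> cone K" "w x \<in> cone K"
  shows "w x = x"
proof -
  obtain l where "set l \<subseteq> K" "w = refl_word l"
    using assms(1) weyl_group_iff_refl_word by blast
  then show ?thesis using refl_word_chamber_fixed[of l x] assms(2,3) by simp
qed

text \<open>A point of the orbit maximising the inner product with a vector \<open>\<rho>\<close> with \<open>\<rho> \<bullet> k = 1\<close> on
  \<open>K\<close> lies in the chamber, since \<open>refl k\<close> adds \<open>-2 (y \<bullet> k) / (k \<bullet> k)\<close> to this inner product.\<close>
lemma weyl_group_chamber_exists: "\<exists>w\<in>weyl_group K. w x \<in> cone K"
proof -
  obtain \<rho> where \<rho>: "\<And>k. k \<in> K \<Longrightarrow> \<rho> \<bullet> k = 1"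
    using independent_inner_values[OF independent_K, of "\<lambda>_. 1"] by blast
  define f where "f v = v x \<bullet> \<rho>" for v :: "'a \<Rightarrow> 'a"
  have fin: "finite (f ` weyl_group K)" and ne: "f ` weyl_group K \<noteq> {}"
    using finite_weyl_group_subset_S[OF K_subset_S] weyl_group.id by auto
  obtain w where w: "w \<in> weyl_group K" "f w = Max (f ` weyl_group K)"
    using Max_in[OF fin ne] by fastforce
  have max: "f v \<le> f w" if "v \<in> weyl_group K" for v
    using Max_ge[OF fin] that w(2) by simp
  have "0 \<le> w x \<bullet> k" if k: "k \<in> K" for k
  proof -
    have "refl k (w x) \<bullet> \<rho> \<le> w x \<bullet> \<rho>" using max[OF weyl_group.step[OF w(1) k]] by (simp add: f_def)
    moreover have "refl k (w x) \<bullet> \<rho> = w x \<bullet> \<rho> - 2 * (w x \<bullet> k) / (k \<bullet> k)"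
      using \<rho>[OF k] by (simp add: inner_refl_right inner_commute)
    moreover have "k \<bullet> k > 0" using k zero_notin_K by auto
    ultimately show ?thesis by (simp add: zero_le_divide_iff)
  qed
  then show ?thesis using w(1) unfolding cone_def by blast
qed

end

section \<open>Barycenters and facets of polytopes\<close>

lemma polytope_extreme_points:
  fixes F :: "'a::euclidean_space set"
  assumes "polytope F" "F \<noteq> {}"
  shows "finite {v. v extreme_point_of F}" "{v. v extreme_point_of F} \<noteq> {}"
    and "F = convex hull {v. v extreme_point_of F}"
proof -
  show "finite {v. v extreme_point_of F}"
    by (rule finite_polyhedron_extreme_points[OF polytope_imp_polyhedron[OF assms(1)]])
  show F: "F = convex hull {v. v extreme_point_of F}"
    using Krein_Milman_Minkowski polytope_imp_compact polytope_imp_convex assms(1) by blast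
  show "{v. v extreme_point_of F} \<noteq> {}" using F assms(2) by auto
qed

lemma barycenter_in_polytope:
  fixes F :: "'a::euclidean_space set"
  assumes "polytope F" "F \<noteq> {}"
  shows "barycenter F \<in> F"
proof -
  let ?V = "{v. v extreme_point_of F}"
  have "card ?V > 0" using polytope_extreme_points[OF assms] by (simp add: card_gt_0_iff)
  then have "(\<Sum>v\<in>?V. (1 / real (card ?V)) *\<^sub>R v) \<in> F"
    using polytope_extreme_points[OF assms] polytope_imp_convex[OF assms(1)]
    by (intro convex_sum) (auto simp: extreme_point_of_def)
  then show ?thesis unfolding barycenter_def by (simp add: scaleR_sum_right)
qed

lemma polytope_subset_hyperplane_barycenter:
  fixes F :: "'a::euclidean_space set"
  assumes "polytope F" "F \<noteq> {}" "F \<subseteq> {x. a \<bullet> x \<le> c}" "a \<bullet> barycenter F = c"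
  shows "F \<subseteq> {x. a \<bullet> x = c}"
proof -
  let ?V = "{v. v extreme_point_of F}"
  note V = polytope_extreme_points[OF assms(1,2)]
  have "(\<Sum>v\<in>?V. a \<bullet> v) = real (card ?V) * c"
    using assms(4) V(1,2) unfolding barycenter_def
    by (simp add: inner_sum_right field_simps card_gt_0_iff)
  then have "(\<Sum>v\<in>?V. c - a \<bullet> v) = 0" by (simp add: sum_subtractf)
  moreover have "\<forall>v\<in>?V. 0 \<le> c - a \<bullet> v"
    using assms(3) by (auto simp: extreme_point_of_def)
  ultimately have "?V \<subseteq> {x. a \<bullet> x = c}"
    using sum_nonneg_eq_0_iff[OF V(1), of "\<lambda>v. c - a \<bullet> v"] by auto
  then have "convex hull ?V \<subseteq> {x. a \<bullet> x = c}"
    by (simp add: convex_hyperplane hull_minimal)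
  then show ?thesis using V(3) by simp
qed

lemma barycenter_in_rel_interior:
  fixes F :: "'a::euclidean_space set"
  assumes "polytope F" "F \<noteq> {}"
  shows "barycenter F \<in> rel_interior F"
proof (rule ccontr)
  assume "barycenter F \<notin> rel_interior F"
  then have "barycenter F \<in> \<Union> {G. G facet_of F}"
    using barycenter_in_polytope[OF assms] rel_boundary_of_polyhedron polytope_imp_polyhedron assms(1)
    by blast
  then obtain G where G: "G facet_of F" "barycenter F \<in> G" by blast
  obtain a c where "F \<subseteq> {x. a \<bullet> x \<le> c}" "G = F \<inter> {x. a \<bullet> x = c}"
    using facet_of_polyhedron[OF polytope_imp_polyhedron[OF assms(1)] G(1)] by blast
  then have "G = F"
    using polytope_subset_hyperplane_barycenter[OF assms] G(2) by blast
  then show False using G(1) by (simp add: facet_of_irrefl)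
qed

lemma barycenter_facet_in_rel_interior:
  assumes "polytope P" "F facet_of P"
  shows "barycenter F \<in> rel_interior F"
proof (rule barycenter_in_rel_interior)
  show "polytope F"
    using face_of_polytope_polytope[OF assms(1) facet_of_imp_face_of[OF assms(2)]] .
  show "F \<noteq> {}" using assms(2) by (simp add: facet_of_def)
qed

lemma extreme_point_of_linear_image:
  fixes w :: "'a::euclidean_space \<Rightarrow> 'b::euclidean_space"
  assumes "linear w" "inj w"
  shows "{v. v extreme_point_of w ` F} = w ` {v. v extreme_point_of F}"
proof -
  have "y extreme_point_of F \<longleftrightarrow> w y extreme_point_of w ` F" for y
    using face_of_linear_image[OF assms, of "{y}" F] by (simp add: face_of_singleton)
  moreover have "x extreme_point_of w ` F \<Longrightarrow> x \<in> w ` F" for x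
    by (simp add: extreme_point_of_def)
  ultimately show ?thesis by auto
qed

lemma barycenter_linear_image:
  fixes w :: "'a::euclidean_space \<Rightarrow> 'a"
  assumes "linear w" "inj w"
  shows "barycenter (w ` F) = w (barycenter F)"
proof -
  let ?V = "{v. v extreme_point_of F}"
  have "card (w ` ?V) = card ?V" "(\<Sum>v\<in>w ` ?V. v) = w (\<Sum>v\<in>?V. v)"
    using assms by (simp_all add: card_image inj_on_subset sum.reindex linear_sum)
  then show ?thesis
    unfolding barycenter_def extreme_point_of_linear_image[OF assms] by (simp add: linear_scale assms(1))
qed

lemma facet_of_subset_eq:
  assumes "G facet_of Q" "G' facet_of Q" "G \<subseteq> G'"
  shows "G = G'"
proof (rule ccontr)
  assume "G \<noteq> G'"
  moreover have "G face_of G'"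
    by (meson assms face_of_subset facet_of_imp_face_of facet_of_imp_subset)
  ultimately have "aff_dim G < aff_dim G'"
    using face_of_aff_dim_lt assms(2) face_of_imp_convex facet_of_imp_face_of by blast
  then show False using assms(1,2) by (simp add: facet_of_def)
qed

lemma subset_hyperplane_rel_interior:
  assumes "convex G" "x \<in> rel_interior G" "G \<subseteq> {y. a \<bullet> y \<le> c}" "a \<bullet> x = c"
  shows "G \<subseteq> {y. a \<bullet> y = c}"
proof -
  have "(G \<inter> {y. a \<bullet> y = c}) face_of G"
    using assms(1,3) by (intro face_of_Int_supporting_hyperplane_le) auto
  moreover have "x \<in> G \<inter> {y. a \<bullet> y = c}" using assms(2,4) rel_interior_subset by blast
  ultimately show ?thesis using face_of_disjoint_rel_interior assms(2) by blast
qed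

lemma polytope_facets_eq_barycenter:
  assumes "polytope P" "F facet_of P" "F' facet_of P" "barycenter F \<in> F'"
  shows "F = F'"
proof -
  obtain u h where uh: "P \<subseteq> {x. u \<bullet> x \<le> h}" "F' = P \<inter> {x. u \<bullet> x = h}"
    using facet_of_polyhedron[OF polytope_imp_polyhedron[OF assms(1)] assms(3)] by blast
  have "F \<subseteq> {x. u \<bullet> x = h}"
    using face_of_imp_convex[OF facet_of_imp_face_of[OF assms(2)]]
      barycenter_facet_in_rel_interior[OF assms(1,2)] facet_of_imp_subset[OF assms(2)] uh assms(4)
    by (intro subset_hyperplane_rel_interior) auto
  then show ?thesis using facet_of_subset_eq assms(2,3) facet_of_imp_subset[OF assms(2)] uh(2) by blast
qed

lemma affine_hull_facet:
  fixes P :: "'a::euclidean_space set"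
  assumes "aff_dim P = DIM('a)" "F facet_of P" "u \<noteq> 0" "F \<subseteq> {x. u \<bullet> x = h}"
  shows "affine hull F = {x. u \<bullet> x = h}"
proof (rule affine_dim_equal)
  show "affine hull F \<subseteq> {x. u \<bullet> x = h}"
    using assms(4) by (simp add: affine_hyperplane hull_minimal)
  show "aff_dim (affine hull F) = aff_dim {x. u \<bullet> x = h}"
    using assms(1-3) by (simp add: facet_of_def)
  show "affine hull F \<noteq> {}" using assms(2) by (simp add: facet_of_def)
qed (auto simp: affine_hyperplane)

lemma facet_of_linear_image:
  fixes w :: "'a::euclidean_space \<Rightarrow> 'a"
  assumes "linear w" "inj w" "F facet_of P"
  shows "w ` F facet_of w ` P"
  using assms face_of_linear_image[OF assms(1,2)] aff_dim_injective_linear_image[OF assms(1,2)]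
  by (simp add: facet_of_def)

lemma facet_of_supporting_hyperplane_open:
  fixes Q :: "'a::euclidean_space set"
  assumes "convex Q" "aff_dim Q = DIM('a)" "a \<noteq> 0" "Q \<subseteq> {x. a \<bullet> x \<le> c}"
    and "open U" "y \<in> U" "a \<bullet> y = c" "U \<inter> {x. a \<bullet> x = c} \<subseteq> Q"
  shows "Q \<inter> {x. a \<bullet> x = c} facet_of Q"
proof -
  have "aff_dim ({x. a \<bullet> x = c} \<inter> U) = DIM('a) - 1"
    using aff_dim_convex_Int_open[OF convex_hyperplane assms(5), of a c] assms(3,6,7) by force
  moreover have "{x. a \<bullet> x = c} \<inter> U \<subseteq> Q \<inter> {x. a \<bullet> x = c}" using assms(8) by blast
  ultimately have "DIM('a) - 1 \<le> aff_dim (Q \<inter> {x. a \<bullet> x = c})"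
    by (metis aff_dim_subset)
  moreover have "aff_dim (Q \<inter> {x. a \<bullet> x = c}) \<le> DIM('a) - 1"
    using aff_dim_subset[of "Q \<inter> {x. a \<bullet> x = c}" "{x. a \<bullet> x = c}"] assms(3) by auto
  moreover have "(Q \<inter> {x. a \<bullet> x = c}) face_of Q"
    using assms(1,4) by (intro face_of_Int_supporting_hyperplane_le) auto
  ultimately show ?thesis
    using assms(2,6,7,8) unfolding facet_of_def by auto
qed

definition open_chamber :: "'a::euclidean_space set \<Rightarrow> 'a set" where
  "open_chamber K = {x. \<forall>k\<in>K. 0 < x \<bullet> k}"

lemma zero_in_cone: "0 \<in> cone K'"
  by (simp add: cone_def)

lemma convex_chamber: "convex (cone K)"
  unfolding convex_def cone_def by (auto simp: inner_add_left)

lemma open_open_chamber: "finite K \<Longrightarrow> open (open_chamber K)"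
proof -
  assume "finite K"
  moreover have "open_chamber K = (\<Inter>k\<in>K. {x. 0 < k \<bullet> x})"
    by (auto simp: open_chamber_def inner_commute)
  ultimately show ?thesis by (auto intro: open_INT open_halfspace_gt)
qed

lemma open_chamber_subset_cone: "open_chamber K \<subseteq> cone K"
  by (auto simp: open_chamber_def cone_def less_imp_le)

lemma open_chamber_Diff_wall_subset_cone:
  assumes "x \<in> open_chamber (K - {k})" "x \<bullet> k = 0"
  shows "x \<in> cone K"
  unfolding cone_def
proof (intro CollectI ballI)
  fix j assume "j \<in> K"
  then show "0 \<le> x \<bullet> j" using assms by (cases "j = k") (auto simp: open_chamber_def less_imp_le)
qed

lemma eventually_at_right_exists: "\<forall>\<^sub>F t in at_right (0::real). Q t \<Longrightarrow> \<exists>t. Q t"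
  using eventually_happens'[OF trivial_limit_at_right_real] .

lemma eventually_at_right_in_open:
  fixes x d :: "'a::real_normed_vector"
  assumes "open U" "x \<in> U"
  shows "\<forall>\<^sub>F t in at_right 0. x + t *\<^sub>R d \<in> U"
proof -
  have "((\<lambda>t. x + t *\<^sub>R d) \<longlongrightarrow> x + 0 *\<^sub>R d) (at_right 0)"
    by (intro tendsto_intros)
  then show ?thesis using topological_tendstoD assms by fastforce
qed

lemma eventually_at_right_in_open_chamber:
  assumes "finite K" "x \<in> cone K" "\<And>k. k \<in> K \<Longrightarrow> x \<bullet> k = 0 \<Longrightarrow> 0 < d \<bullet> k"
  shows "\<forall>\<^sub>F t in at_right 0. x + t *\<^sub>R d \<in> open_chamber K"
  unfolding open_chamber_def mem_Collect_eq
proof (rule eventually_ball_finite[OF assms(1)], rule ballI)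
  fix k assume k: "k \<in> K"
  show "\<forall>\<^sub>F t in at_right 0. 0 < (x + t *\<^sub>R d) \<bullet> k"
  proof (cases "x \<bullet> k = 0")
    case True
    then show ?thesis
      using assms(3)[OF k] eventually_at_right_less[of 0] by (auto simp: inner_add_left elim: eventually_mono)
  next
    case False
    then have "0 < x \<bullet> k" using assms(2) k by (force simp: cone_def)
    moreover have "((\<lambda>t. (x + t *\<^sub>R d) \<bullet> k) \<longlongrightarrow> (x + 0 *\<^sub>R d) \<bullet> k) (at_right 0)"
      by (intro tendsto_intros)
    ultimately show ?thesis using order_tendstoD(1) by fastforce
  qed
qed

section \<open>Facets of a symmetric polytope\<close>

locale weyl_polytope = parabolic_subgroup +
  fixes \<Lambda> P :: "'a set"
  assumes finite_Lambda: "finite \<Lambda>"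
    and P_eq: "P = convex hull (\<Union>w\<in>weyl_group S. w ` \<Lambda>)"
    and aff_dim_P: "aff_dim P = DIM('a)"
begin

lemma polytope_P: "polytope P"
  unfolding P_eq using finite_weyl_group_subset_S finite_Lambda by (simp add: polytope_convex_hull)

lemma convex_P: "convex P"
  using polytope_P polytope_imp_convex by blast

lemma rel_interior_P: "rel_interior P = interior P"
  using aff_dim_P aff_dim_eq_full rel_interior_interior by blast

lemma weyl_group_image_P:
  assumes w: "w \<in> weyl_group S"
  shows "w ` P = P"
proof -
  let ?O = "\<Union>v\<in>weyl_group S. v ` \<Lambda>"
  have sub: "v ` ?O \<subseteq> ?O" if "v \<in> weyl_group S" for v
  proof
    fix y assume "y \<in> v ` ?O"
    then obtain u l where "u \<in> weyl_group S" "l \<in> \<Lambda>" "y = (v \<circ> u) l" by auto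
    then show "y \<in> ?O" using weyl_group_comp[OF that] by blast
  qed
  then have "?O = w ` (inv w ` ?O)" using w by (simp add: image_comp)
  then have "w ` ?O = ?O"
    using sub[OF w] sub[OF inv_in_weyl_group[OF w]] by blast
  then show ?thesis
    unfolding P_eq using convex_hull_linear_image orthogonal_transformation_linear
      orthogonal_transformation_weyl_group[OF w] by metis
qed

text \<open>Averaging an interior point over \<open>W\<close> gives an interior point fixed by every simple
  reflection, hence orthogonal to \<open>S\<close>, hence \<open>0\<close>.\<close>
lemma zero_in_interior_P: "0 \<in> interior P"
proof -
  let ?W = "weyl_group S"
  obtain p where p: "p \<in> interior P"
    using rel_interior_P rel_interior_eq_empty convex_P aff_dim_P by fastforce
  define q where "q = (\<Sum>w\<in>?W. (1 / card ?W) *\<^sub>R w p)"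
  have "card ?W > 0" using finite_weyl_group_subset_S weyl_group.id by (auto simp: card_gt_0_iff)
  moreover have "w p \<in> interior P" if "w \<in> ?W" for w
    using p weyl_group_image_P[OF that] interior_injective_linear_image
      orthogonal_transformation_linear orthogonal_transformation_inj
      orthogonal_transformation_weyl_group[OF that] by (metis imageI)
  ultimately have "q \<in> interior P"
    unfolding q_def using finite_weyl_group_subset_S[OF order_refl]
    by (intro convex_sum convex_interior convex_P) auto
  moreover have "q \<bullet> a = 0" if a: "a \<in> S" for a
  proof -
    have "refl a q = (\<Sum>w\<in>?W. (1 / card ?W) *\<^sub>R (refl a \<circ> w) p)"
      unfolding q_def using orthogonal_transformation_refl[of a]
      by (simp add: orthogonal_transformation_def linear_sum linear_scale)
    then have "refl a q = q"
      unfolding q_def using sum_weyl_group_refl_comp[OF a, of "\<lambda>w. (1 / card ?W) *\<^sub>R w p"] by simp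
    then show ?thesis by (simp add: refl_eq_self_iff)
  qed
  then have "q = 0"
    using orthogonal_to_span[of q S q] span_S by (simp add: orthogonal_def)
  ultimately show ?thesis by simp
qed

lemma zero_notin_facet: "F facet_of P \<Longrightarrow> 0 \<notin> F"
  using face_of_disjoint_interior zero_in_interior_P facet_of_imp_face_of facet_of_irrefl by blast

lemma barycenter_facet_in: "F facet_of P \<Longrightarrow> barycenter F \<in> F"
  using barycenter_facet_in_rel_interior[OF polytope_P] rel_interior_subset by blast

lemma facet_weyl_image: "w \<in> weyl_group S \<Longrightarrow> F facet_of P \<Longrightarrow> w ` F facet_of P"
  using facet_of_linear_image weyl_group_image_P orthogonal_transformation_linear
    orthogonal_transformation_inj orthogonal_transformation_weyl_group by metis

lemma barycenter_weyl_image: "w \<in> weyl_group S \<Longrightarrow> barycenter (w ` F) = w (barycenter F)"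
  using barycenter_linear_image orthogonal_transformation_linear orthogonal_transformation_inj
    orthogonal_transformation_weyl_group by blast

text \<open>Expands \<open>u \<bullet> refl k y \<le> u \<bullet> y\<close>, which holds because \<open>refl k y \<in> P\<close>.\<close>
lemma facet_refl_inequality:
  assumes "P \<subseteq> {x. u \<bullet> x \<le> h}" "y \<in> P" "u \<bullet> y = h" "k \<in> S"
  shows "0 \<le> (y \<bullet> k) * (u \<bullet> k)"
proof -
  have "refl k y \<in> P"
    using weyl_group_image_P[OF refl_in_weyl_group[OF assms(4)]] assms(2) by blast
  then have "0 \<le> 2 * (y \<bullet> k) / (k \<bullet> k) * (u \<bullet> k)"
    using assms(1,3) by (auto simp: inner_refl_right)
  moreover have "k \<bullet> k > 0" using assms(4) zero_notin_R S_subset_R by auto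
  ultimately show ?thesis by (simp add: zero_le_mult_iff zero_le_divide_iff)
qed

lemma eventually_ray_in_interior_P: "\<forall>\<^sub>F t in at_right 0. t *\<^sub>R z \<in> interior P"
  using eventually_at_right_in_open[OF open_interior zero_in_interior_P, of z] by simp

lemma aff_dim_fundamental_polytope: "aff_dim (P \<inter> cone K) = DIM('a)"
proof -
  obtain \<rho> where \<rho>: "\<And>k. k \<in> K \<Longrightarrow> \<rho> \<bullet> k = 1"
    using independent_inner_values[OF independent_K, of "\<lambda>_. 1"] by blast
  have "\<forall>\<^sub>F t in at_right 0. t *\<^sub>R \<rho> \<in> open_chamber K"
    using eventually_at_right_in_open_chamber[OF finite_K zero_in_cone, of \<rho>] \<rho> by simp
  then have "\<forall>\<^sub>F t in at_right 0. t *\<^sub>R \<rho> \<in> interior P \<and> t *\<^sub>R \<rho> \<in> open_chamber K"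
    by (rule eventually_conj[OF eventually_ray_in_interior_P])
  from eventually_at_right_exists[OF this] have "interior P \<inter> open_chamber K \<noteq> {}" by blast
  then have "aff_dim (interior P \<inter> open_chamber K) = DIM('a)"
    by (rule aff_dim_open[OF open_Int[OF open_interior open_open_chamber[OF finite_K]]])
  moreover have "aff_dim (interior P \<inter> open_chamber K) \<le> aff_dim (P \<inter> cone K)"
    using interior_subset open_chamber_subset_cone by (intro aff_dim_subset) blast
  ultimately show ?thesis using aff_dim_le_DIM[of "P \<inter> cone K"] by linarith
qed

lemma wall_witness:
  assumes "k \<in> K"
  obtains y where "y \<in> interior P" "y \<bullet> k = 0" "y \<in> open_chamber (K - {k})"
proof -
  obtain z where z: "\<And>j. j \<in> K \<Longrightarrow> z \<bullet> j = (if j = k then 0 else 1)"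
    using independent_inner_values[OF independent_K, of "\<lambda>j. if j = k then 0 else 1"] by blast
  have "\<forall>\<^sub>F t in at_right 0. t *\<^sub>R z \<in> open_chamber (K - {k})"
    using eventually_at_right_in_open_chamber[OF _ zero_in_cone, of "K - {k}" z] finite_K z by simp
  then have "\<forall>\<^sub>F t in at_right 0. t *\<^sub>R z \<in> interior P \<and> t *\<^sub>R z \<in> open_chamber (K - {k})"
    by (rule eventually_conj[OF eventually_ray_in_interior_P])
  from eventually_at_right_exists[OF this]
  obtain t where "t *\<^sub>R z \<in> interior P" "t *\<^sub>R z \<in> open_chamber (K - {k})" by blast
  moreover have "t *\<^sub>R z \<bullet> k = 0" using z assms by simp
  ultimately show ?thesis using that by blast
qed

lemma wall_facet:
  assumes k: "k \<in> K"
  shows "wall k \<inter> P \<inter> cone K facet_of P \<inter> cone K"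
proof -
  obtain y where y: "y \<in> interior P" "y \<bullet> k = 0" "y \<in> open_chamber (K - {k})"
    using wall_witness[OF k] by blast
  have "P \<inter> cone K \<inter> {x. (- k) \<bullet> x = 0} facet_of P \<inter> cone K"
  proof (rule facet_of_supporting_hyperplane_open)
    show "convex (P \<inter> cone K)"
      using convex_P convex_chamber by (rule convex_Int)
    show "P \<inter> cone K \<subseteq> {x. (- k) \<bullet> x \<le> 0}" using k by (auto simp: cone_def inner_commute)
    show "open (interior P \<inter> open_chamber (K - {k}))"
      using finite_K by (intro open_Int open_interior open_open_chamber) simp
    show "interior P \<inter> open_chamber (K - {k}) \<inter> {x. (- k) \<bullet> x = 0} \<subseteq> P \<inter> cone K"
      using interior_subset open_chamber_Diff_wall_subset_cone by (fastforce simp: inner_commute)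
  qed (use y k zero_notin_K aff_dim_fundamental_polytope in \<open>auto simp: inner_commute\<close>)
  moreover have "P \<inter> cone K \<inter> {x. (- k) \<bullet> x = 0} = wall k \<inter> P \<inter> cone K"
    by (auto simp: wall_def inner_commute)
  ultimately show ?thesis by simp
qed

lemma facet_Int_cone_facet:
  assumes F: "F facet_of P" and b: "barycenter F \<in> cone K"
  shows "F \<inter> cone K facet_of P \<inter> cone K"
proof -
  obtain u h where uh: "u \<noteq> 0" "P \<subseteq> {x. u \<bullet> x \<le> h}" "F = P \<inter> {x. u \<bullet> x = h}"
    using facet_of_polyhedron[OF polytope_imp_polyhedron[OF polytope_P] F] by blast
  have "barycenter F \<in> rel_interior F" by (rule barycenter_facet_in_rel_interior[OF polytope_P F])
  then obtain T where T: "open T" "barycenter F \<in> T" "T \<inter> affine hull F \<subseteq> F"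
    by (auto simp: mem_rel_interior)
  have bu: "u \<bullet> barycenter F = h" using barycenter_facet_in[OF F] uh(3) by blast
  have "h \<noteq> 0"
    using zero_notin_facet[OF F] uh(3) interior_subset zero_in_interior_P by auto
  then obtain d where d: "d \<bullet> u = 0" "\<And>j. j \<in> {j \<in> K. barycenter F \<bullet> j = 0} \<Longrightarrow> d \<bullet> j = 1"
    using independent_direction[of "{j \<in> K. barycenter F \<bullet> j = 0}" "barycenter F" u]
      independent_mono[OF independent_K] bu by (auto simp: inner_commute)
  have "\<forall>\<^sub>F t in at_right 0. barycenter F + t *\<^sub>R d \<in> T \<and> barycenter F + t *\<^sub>R d \<in> open_chamber K"
    using d(2) by (intro eventually_conj eventually_at_right_in_open[OF T(1,2)]
        eventually_at_right_in_open_chamber[OF finite_K b]) auto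
  from eventually_at_right_exists[OF this]
  obtain t where t: "barycenter F + t *\<^sub>R d \<in> T \<inter> open_chamber K" by blast
  have "P \<inter> cone K \<inter> {x. u \<bullet> x = h} facet_of P \<inter> cone K"
  proof (rule facet_of_supporting_hyperplane_open[OF _ aff_dim_fundamental_polytope uh(1) _ _ t])
    show "convex (P \<inter> cone K)" using convex_P convex_chamber by (rule convex_Int)
    show "open (T \<inter> open_chamber K)" using T(1) open_open_chamber[OF finite_K] by (rule open_Int)
    show "u \<bullet> (barycenter F + t *\<^sub>R d) = h" using bu d(1) by (simp add: inner_add_right inner_commute)
    show "T \<inter> open_chamber K \<inter> {x. u \<bullet> x = h} \<subseteq> P \<inter> cone K"
      using T(3) affine_hull_facet[OF aff_dim_P F uh(1)] uh(3) open_chamber_subset_cone by blast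
  qed (use uh(2) in auto)
  moreover have "P \<inter> cone K \<inter> {x. u \<bullet> x = h} = F \<inter> cone K" using uh(3) by blast
  ultimately show ?thesis by simp
qed

text \<open>If a facet \<open>F\<close> meets the open chamber, its normal \<open>u\<close> has \<open>u \<bullet> k \<ge> 0\<close> for all \<open>k \<in> K\<close>;
  when \<open>u \<bullet> k = 0\<close>, \<open>refl k\<close> preserves \<open>F\<close> and so fixes its barycenter.\<close>
lemma barycenter_in_cone_if_meets_open_chamber:
  assumes F: "F facet_of P" and x: "x \<in> F" "x \<in> open_chamber K"
  shows "barycenter F \<in> cone K"
proof -
  obtain u h where uh: "P \<subseteq> {x. u \<bullet> x \<le> h}" "F = P \<inter> {x. u \<bullet> x = h}"
    using facet_of_polyhedron[OF polytope_imp_polyhedron[OF polytope_P] F] by blast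
  have bF: "barycenter F \<in> F" by (rule barycenter_facet_in[OF F])
  have "0 \<le> barycenter F \<bullet> k" if k: "k \<in> K" for k
  proof -
    have kS: "k \<in> S" using k K_subset_S by blast
    have "0 \<le> (x \<bullet> k) * (u \<bullet> k)" using facet_refl_inequality[OF uh(1) _ _ kS] x(1) uh(2) by blast
    moreover have "0 < x \<bullet> k" using x(2) k by (simp add: open_chamber_def)
    ultimately have uk: "0 \<le> u \<bullet> k" by (simp add: zero_le_mult_iff)
    show ?thesis
    proof (cases "u \<bullet> k = 0")
      case True
      have "refl k ` F = F"
      proof (rule refl_image_eq)
        fix y assume "y \<in> F"
        moreover have "refl k ` P = P" using weyl_group_image_P[OF refl_in_weyl_group[OF kS]] .
        ultimately show "refl k y \<in> F" using uh(2) True by (auto simp: inner_refl_right)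
      qed
      then have "refl k (barycenter F) = barycenter F"
        using barycenter_weyl_image[OF refl_in_weyl_group[OF kS], of F] by simp
      then show ?thesis by (simp add: refl_eq_self_iff)
    next
      case False
      then show ?thesis
        using facet_refl_inequality[OF uh(1) _ _ kS, of "barycenter F"] bF uh(2) uk
        by (auto simp: zero_le_mult_iff)
    qed
  qed
  then show ?thesis by (simp add: cone_def)
qed

lemma open_chamber_boundary_point_in_facet:
  assumes "x \<in> P" "x \<in> open_chamber K" "x \<notin> interior (P \<inter> cone K)"
  obtains F where "F facet_of P" "x \<in> F"
proof -
  have "interior P \<inter> open_chamber K \<subseteq> interior (P \<inter> cone K)"
    using open_chamber_subset_cone open_open_chamber[OF finite_K] interior_subset
    by (intro interior_maximal) auto
  then have "x \<in> P - rel_interior P" using assms rel_interior_P by blast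
  then show ?thesis
    using rel_boundary_of_polyhedron[OF polytope_imp_polyhedron[OF polytope_P]] that by blast
qed

lemma facet_of_fundamental_polytope_cases:
  assumes G: "G facet_of P \<inter> cone K"
  obtains (facet) F where "F facet_of P" "barycenter F \<in> cone K" "G = F \<inter> cone K"
    | (wall) k where "k \<in> K" "G = wall k \<inter> P \<inter> cone K"
proof -
  have G_sub: "G \<subseteq> P \<inter> cone K" using G by (rule facet_of_imp_subset)
  have "convex G" using face_of_imp_convex facet_of_imp_face_of[OF G] by blast
  moreover have "G \<noteq> {}" using G by (simp add: facet_of_def)
  ultimately obtain x where x: "x \<in> rel_interior G" using rel_interior_eq_empty by blast
  then have xG: "x \<in> G" using rel_interior_subset by blast
  show ?thesis
  proof (cases "x \<in> open_chamber K")
    case False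
    then obtain k where k: "k \<in> K" "x \<bullet> k = 0"
      using xG G_sub by (force simp: open_chamber_def cone_def)
    have "G \<subseteq> {y. (- k) \<bullet> y = 0}"
      using G_sub k by (intro subset_hyperplane_rel_interior[OF \<open>convex G\<close> x])
        (auto simp: cone_def inner_commute)
    then have "G \<subseteq> wall k \<inter> P \<inter> cone K" using G_sub by (auto simp: wall_def inner_commute)
    then show ?thesis using facet_of_subset_eq[OF G wall_facet[OF k(1)]] wall k(1) by blast
  next
    case True
    have "G \<noteq> P \<inter> cone K" using G facet_of_irrefl by blast
    then have "x \<notin> interior (P \<inter> cone K)"
      using face_of_disjoint_interior[OF facet_of_imp_face_of[OF G]] xG by blast
    then obtain F where F: "F facet_of P" "x \<in> F"
      using open_chamber_boundary_point_in_facet True xG G_sub by blast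
    obtain u h where uh: "P \<subseteq> {x. u \<bullet> x \<le> h}" "F = P \<inter> {x. u \<bullet> x = h}"
      using facet_of_polyhedron[OF polytope_imp_polyhedron[OF polytope_P] F(1)] by blast
    have "G \<subseteq> {y. u \<bullet> y = h}"
      using G_sub uh F(2) by (intro subset_hyperplane_rel_interior[OF \<open>convex G\<close> x]) auto
    then have "G \<subseteq> F \<inter> cone K" using G_sub uh(2) by blast
    moreover have "barycenter F \<in> cone K"
      by (rule barycenter_in_cone_if_meets_open_chamber[OF F True])
    ultimately show ?thesis
      using facet_of_subset_eq[OF G facet_Int_cone_facet[OF F(1)]] facet F(1) by blast
  qed
qed

lemma facet_Int_cone_inj:
  assumes "F facet_of P" "barycenter F \<in> cone K" "F' facet_of P" "F \<inter> cone K = F' \<inter> cone K"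
  shows "F = F'"
proof -
  have "barycenter F \<in> F'" using barycenter_facet_in[OF assms(1)] assms(2,4) by blast
  then show ?thesis using polytope_facets_eq_barycenter[OF polytope_P assms(1,3)] by blast
qed

lemma wall_facet_inj:
  assumes "k \<in> K" "k' \<in> K" "wall k \<inter> P \<inter> cone K = wall k' \<inter> P \<inter> cone K"
  shows "k = k'"
proof (rule ccontr)
  assume "k \<noteq> k'"
  obtain y where y: "y \<in> interior P" "y \<bullet> k = 0" "y \<in> open_chamber (K - {k})"
    using wall_witness[OF assms(1)] by blast
  then have "y \<in> wall k \<inter> P \<inter> cone K"
    using interior_subset open_chamber_Diff_wall_subset_cone by (auto simp: wall_def)
  then have "y \<in> wall k'" using assms(3) by blast
  then have "y \<bullet> k' = 0" by (simp add: wall_def)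
  moreover have "0 < y \<bullet> k'" using y(3) assms(2) \<open>k \<noteq> k'\<close> by (simp add: open_chamber_def)
  ultimately show False by simp
qed

lemma facet_Int_cone_neq_wall:
  assumes "F facet_of P" "k \<in> K"
  shows "F \<inter> cone K \<noteq> wall k \<inter> P \<inter> cone K"
proof -
  have "0 \<in> wall k \<inter> P \<inter> cone K"
    using interior_subset zero_in_interior_P zero_in_cone by (auto simp: wall_def)
  then show ?thesis using zero_notin_facet[OF assms(1)] by blast
qed

lemma fundamental_polytope_facets_bij:
  "bij_betw (case_sum (\<lambda>F. F \<inter> cone K) (\<lambda>k. wall k \<inter> P \<inter> cone K))
     (Inl ` {F. F facet_of P \<and> barycenter F \<in> cone K} \<union> Inr ` K)
     {G. G facet_of (P \<inter> cone K)}"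
proof (rule bij_betw_imageI)
  show "inj_on (case_sum (\<lambda>F. F \<inter> cone K) (\<lambda>k. wall k \<inter> P \<inter> cone K))
     (Inl ` {F. F facet_of P \<and> barycenter F \<in> cone K} \<union> Inr ` K)"
    using facet_Int_cone_inj wall_facet_inj facet_Int_cone_neq_wall
    by (auto simp: inj_on_def) metis+
  show "case_sum (\<lambda>F. F \<inter> cone K) (\<lambda>k. wall k \<inter> P \<inter> cone K) `
     (Inl ` {F. F facet_of P \<and> barycenter F \<in> cone K} \<union> Inr ` K) = {G. G facet_of (P \<inter> cone K)}"
  proof (intro equalityI subsetI)
    fix G assume "G \<in> {G. G facet_of (P \<inter> cone K)}"
    then have "G facet_of P \<inter> cone K" by simp
    then show "G \<in> case_sum (\<lambda>F. F \<inter> cone K) (\<lambda>k. wall k \<inter> P \<inter> cone K) `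
        (Inl ` {F. F facet_of P \<and> barycenter F \<in> cone K} \<union> Inr ` K)"
    proof (cases rule: facet_of_fundamental_polytope_cases)
      case (facet F)
      then show ?thesis by (intro image_eqI[of _ _ "Inl F"]) auto
    next
      case (wall k)
      then show ?thesis by (intro image_eqI[of _ _ "Inr k"]) auto
    qed
  qed (auto intro: facet_Int_cone_facet wall_facet)
qed

lemma chamber_facets_weyl_image_eq:
  assumes F: "F facet_of P" "barycenter F \<in> cone K" and F': "F' facet_of P" "barycenter F' \<in> cone K"
    and g: "g \<in> weyl_group K" "g ` F = F'"
  shows "F = F'"
proof -
  have "barycenter F' = g (barycenter F)"
    using barycenter_weyl_image[OF weyl_group_K_subset_S[OF g(1)], of F] g(2) by simp
  then have "barycenter F' = barycenter F"
    using weyl_group_chamber_fixed[OF g(1) F(2)] F'(2) by simp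
  then have "barycenter F \<in> F'" using barycenter_facet_in[OF F'(1)] by simp
  then show ?thesis using polytope_facets_eq_barycenter[OF polytope_P F(1) F'(1)] by blast
qed

lemma left_coset_image_inj:
  assumes F: "F facet_of P" "barycenter F \<in> cone K" "C \<in> left_cosets K F"
    and F': "F' facet_of P" "barycenter F' \<in> cone K" "C' \<in> left_cosets K F'"
    and eq: "(SOME w. w \<in> C) ` F = (SOME w. w \<in> C') ` F'"
  shows "F = F' \<and> C = C'"
proof -
  obtain w where w: "w \<in> weyl_group K" "C = (\<lambda>u. w \<circ> u) ` stabilizer K F"
    using F(3) unfolding left_cosets_def by blast
  obtain w' where w': "w' \<in> weyl_group K" "C' = (\<lambda>u. w' \<circ> u) ` stabilizer K F'"
    using F'(3) unfolding left_cosets_def by blast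
  define g where "g = inv w' \<circ> w"
  have g: "g \<in> weyl_group K"
    unfolding g_def using weyl_group_comp[OF inv_in_weyl_group[OF w'(1)] w(1)] .
  have "w ` F = w' ` F'" using eq unfolding w(2) w'(2) some_left_coset_image .
  then have "g ` F = F'"
    unfolding g_def image_comp[symmetric] using weyl_group_inv_comp[OF w'(1)]
    by (simp add: image_comp)
  then have FF': "F = F'" using chamber_facets_weyl_image_eq[OF F(1,2) F'(1,2) g] by blast
  then have "g \<in> stabilizer K F" using g \<open>g ` F = F'\<close> by (simp add: stabilizer_def)
  moreover have "w = w' \<circ> g"
    unfolding g_def using weyl_group_comp_inv[OF w'(1)] by (metis comp_assoc id_comp)
  ultimately have "C = (\<lambda>u. w' \<circ> u) ` ((\<lambda>u. g \<circ> u) ` stabilizer K F)"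
    unfolding w(2) image_image by (simp add: comp_assoc)
  also have "\<dots> = (\<lambda>u. w' \<circ> u) ` stabilizer K F"
    using stabilizer_left_coset_eq[OF \<open>g \<in> stabilizer K F\<close>] by simp
  finally have "C = (\<lambda>u. w' \<circ> u) ` stabilizer K F" .
  then show ?thesis using FF' w'(2) by simp
qed

lemma facet_eq_left_coset_image:
  assumes G: "G facet_of P"
  obtains F C where "F facet_of P" "barycenter F \<in> cone K" "C \<in> left_cosets K F"
    and "G = (SOME w. w \<in> C) ` F"
proof -
  obtain w where w: "w \<in> weyl_group K" "w (barycenter G) \<in> cone K"
    using weyl_group_chamber_exists by blast
  have "w ` G facet_of P" using facet_weyl_image[OF weyl_group_K_subset_S[OF w(1)] G] .
  moreover have "barycenter (w ` G) \<in> cone K"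
    using barycenter_weyl_image[OF weyl_group_K_subset_S[OF w(1)]] w(2) by simp
  moreover have "(\<lambda>u. inv w \<circ> u) ` stabilizer K (w ` G) \<in> left_cosets K (w ` G)"
    unfolding left_cosets_def using inv_in_weyl_group[OF w(1)] by blast
  moreover have "G = (SOME v. v \<in> (\<lambda>u. inv w \<circ> u) ` stabilizer K (w ` G)) ` w ` G"
    unfolding some_left_coset_image
    using orthogonal_transformation_inj[OF orthogonal_transformation_weyl_group[OF w(1)]]
    by (simp add: image_inv_f_f)
  ultimately show ?thesis using that by blast
qed

lemma left_coset_image_facet:
  assumes "F facet_of P" "C \<in> left_cosets K F"
  shows "(SOME w. w \<in> C) ` F facet_of P"
proof -
  obtain w where w: "w \<in> weyl_group K" "C = (\<lambda>u. w \<circ> u) ` stabilizer K F"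
    using assms(2) unfolding left_cosets_def by blast
  show ?thesis
    unfolding w(2) some_left_coset_image
    by (rule facet_weyl_image[OF weyl_group_K_subset_S[OF w(1)] assms(1)])
qed

lemma facets_bij_left_cosets:
  "bij_betw (\<lambda>(F, C). (SOME w. w \<in> C) ` F)
     {(F, C). F facet_of P \<and> barycenter F \<in> cone K \<and> C \<in> left_cosets K F}
     {G. G facet_of P}"
proof (rule bij_betw_imageI)
  show "inj_on (\<lambda>(F, C). (SOME w. w \<in> C) ` F)
     {(F, C). F facet_of P \<and> barycenter F \<in> cone K \<and> C \<in> left_cosets K F}"
    using left_coset_image_inj by (auto simp: inj_on_def)
  show "(\<lambda>(F, C). (SOME w. w \<in> C) ` F) `
     {(F, C). F facet_of P \<and> barycenter F \<in> cone K \<and> C \<in> left_cosets K F} = {G. G facet_of P}"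
  proof (intro equalityI subsetI)
    fix G assume "G \<in> {G. G facet_of P}"
    then obtain F C where "F facet_of P" "barycenter F \<in> cone K" "C \<in> left_cosets K F"
      "G = (SOME w. w \<in> C) ` F"
      using facet_eq_left_coset_image by blast
    then show "G \<in> (\<lambda>(F, C). (SOME w. w \<in> C) ` F) `
        {(F, C). F facet_of P \<and> barycenter F \<in> cone K \<and> C \<in> left_cosets K F}"
      by (intro image_eqI[of _ _ "(F, C)"]) auto
  qed (auto intro: left_coset_image_facet)
qed

end

theorem proposition2p4:
  fixes R S K \<Lambda> :: "'a::euclidean_space set" and P :: "'a set"
  assumes "root_system R" and "reduced R" and "simple_system R S"
    and "finite \<Lambda>" and "\<Lambda> \<subseteq> cone S"
    and "P = convex hull (\<Union>w\<in>weyl_group S. w ` \<Lambda>)"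
    and "aff_dim P = int DIM('a)"
    and "K \<subseteq> S"
  shows "bij_betw (case_sum (\<lambda>F. F \<inter> cone K) (\<lambda>k. wall k \<inter> P \<inter> cone K))
           (Inl ` {F. F facet_of P \<and> barycenter F \<in> cone K} \<union> Inr ` K)
           {G. G facet_of (P \<inter> cone K)}
       \<and> bij_betw (\<lambda>(F, C). (SOME w. w \<in> C) ` F)
           {(F, C). F facet_of P \<and> barycenter F \<in> cone K \<and> C \<in> left_cosets K F}
           {G. G facet_of P}"
proof -
  interpret weyl_polytope R S K \<Lambda> P
    using assms by unfold_locales auto
  show ?thesis using fundamental_polytope_facets_bij facets_bij_left_cosets by blast
qed

end
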